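(* Let $(A,\mathfrak m)$ be a Noetherian local ring with infinite residue field, $I$ an $\mathfrak m$-primary ideal, and $M$ a finitely generated $A$-module with $\dim M = 1$. Let $b$ be a positive integer such that $IM \subseteq \mathfrak m^b M$. Then $h_{\overline{G_I(M)}}(0) \ge b$, where $\overline{G_I(M)} = G_I(M)/H^0_{G_+}(G_I(M))$.
   Context: $G = \bigoplus_{n\ge0} I^n/I^{n+1}$, $G_+ = \bigoplus_{n>0}I^n/I^{n+1}$, $G_I(M) = \bigoplus_{n\ge0} I^nM/I^{n+1}M$ is the associated graded module, and for a graded $G$-module $F$, $h_F(t) = \ell(F_t)$ denotes the length of its degree-$t$ component. *)

theory Defs
  imports Main "HOL-Library.Extended_Nat"
begin

section \<open>Commutative algebra over a ring A = UNIV :: 'a set, module M = UNIV :: 'b set\<close>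

definition ideal :: "'a::comm_ring_1 set \<Rightarrow> bool" where
  "ideal J \<longleftrightarrow> 0 \<in> J \<and> (\<forall>x\<in>J. \<forall>y\<in>J. x + y \<in> J) \<and> (\<forall>r. \<forall>x\<in>J. r * x \<in> J)"

definition prime_ideal :: "'a::comm_ring_1 set \<Rightarrow> bool" where
  "prime_ideal P \<longleftrightarrow> ideal P \<and> P \<noteq> UNIV \<and> (\<forall>x y. x * y \<in> P \<longrightarrow> x \<in> P \<or> y \<in> P)"

definition maximal_ideal :: "'a::comm_ring_1 set \<Rightarrow> bool" where
  "maximal_ideal P \<longleftrightarrow> ideal P \<and> P \<noteq> UNIV \<and> (\<forall>J. ideal J \<and> P \<subseteq> J \<longrightarrow> J = P \<or> J = UNIV)"

definition noetherian_ring :: "'a::comm_ring_1 itself \<Rightarrow> bool" where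
  "noetherian_ring T \<longleftrightarrow>
     (\<forall>f :: nat \<Rightarrow> 'a set. (\<forall>n. ideal (f n)) \<and> (\<forall>n. f n \<subseteq> f (Suc n))
        \<longrightarrow> (\<exists>N. \<forall>n\<ge>N. f n = f N))"

definition local_ring :: "'a::comm_ring_1 set \<Rightarrow> bool" where
  "local_ring m \<longleftrightarrow> maximal_ideal m \<and> (\<forall>P. maximal_ideal P \<longrightarrow> P = m)"

text \<open>The equivalence relation whose classes form the residue field A/m.\<close>
definition residue_rel :: "'a::comm_ring_1 set \<Rightarrow> ('a \<times> 'a) set" where
  "residue_rel m = {(x, y). x - y \<in> m}"

definition radical :: "'a::comm_ring_1 set \<Rightarrow> 'a set" where
  "radical J = {x. \<exists>n. x ^ n \<in> J}"

definition m_primary :: "'a::comm_ring_1 set \<Rightarrow> 'a set \<Rightarrow> bool" where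
  "m_primary m J \<longleftrightarrow> ideal J \<and> J \<noteq> UNIV \<and> radical J = m
      \<and> (\<forall>x y. x * y \<in> J \<and> x \<notin> J \<longrightarrow> y \<in> radical J)"

definition ideal_prod :: "'a::comm_ring_1 set \<Rightarrow> 'a set \<Rightarrow> 'a set" where
  "ideal_prod J K = ideal hull {a * c | a c. a \<in> J \<and> c \<in> K}"

primrec ideal_pow :: "'a::comm_ring_1 set \<Rightarrow> nat \<Rightarrow> 'a set" where
  "ideal_pow J 0 = UNIV"
| "ideal_pow J (Suc n) = ideal_prod J (ideal_pow J n)"

definition submod :: "('a::comm_ring_1 \<Rightarrow> 'b::ab_group_add \<Rightarrow> 'b) \<Rightarrow> 'b set \<Rightarrow> bool" where
  "submod scale N \<longleftrightarrow> 0 \<in> N \<and> (\<forall>x\<in>N. \<forall>y\<in>N. x + y \<in> N) \<and> (\<forall>r. \<forall>x\<in>N. scale r x \<in> N)"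

definition fin_gen :: "('a::comm_ring_1 \<Rightarrow> 'b::ab_group_add \<Rightarrow> 'b) \<Rightarrow> bool" where
  "fin_gen scale \<longleftrightarrow> (\<exists>S. finite S \<and> submod scale hull S = UNIV)"

definition idmul :: "('a::comm_ring_1 \<Rightarrow> 'b::ab_group_add \<Rightarrow> 'b) \<Rightarrow> 'a set \<Rightarrow> 'b set \<Rightarrow> 'b set" where
  "idmul scale J N = submod scale hull {scale a x | a x. a \<in> J \<and> x \<in> N}"

definition ann :: "('a::comm_ring_1 \<Rightarrow> 'b::ab_group_add \<Rightarrow> 'b) \<Rightarrow> 'a set" where
  "ann scale = {a. \<forall>x. scale a x = 0}"

definition krull_dim_quot :: "'a::comm_ring_1 set \<Rightarrow> enat" where
  "krull_dim_quot J = Sup {enat n | n. \<exists>P :: nat \<Rightarrow> 'a set.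
      (\<forall>i\<le>n. prime_ideal (P i) \<and> J \<subseteq> P i) \<and> (\<forall>i<n. P i \<subset> P (Suc i))}"

definition module_dim :: "('a::comm_ring_1 \<Rightarrow> 'b::ab_group_add \<Rightarrow> 'b) \<Rightarrow> enat" where
  "module_dim scale = krull_dim_quot (ann scale)"

text \<open>Length of the quotient module N/N' (N' \<subseteq> N submodules): supremum of lengths
  of strict chains of submodules from N' to N.\<close>
definition mlength :: "('a::comm_ring_1 \<Rightarrow> 'b::ab_group_add \<Rightarrow> 'b) \<Rightarrow> 'b set \<Rightarrow> 'b set \<Rightarrow> enat" where
  "mlength scale N' N = Sup {enat n | n. \<exists>C :: nat \<Rightarrow> 'b set. C 0 = N' \<and> C n = N
      \<and> (\<forall>i\<le>n. submod scale (C i)) \<and> (\<forall>i<n. C i \<subset> C (Suc i))}"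

definition filt :: "('a::comm_ring_1 \<Rightarrow> 'b::ab_group_add \<Rightarrow> 'b) \<Rightarrow> 'a set \<Rightarrow> nat \<Rightarrow> 'b set" where
  "filt scale I n = idmul scale (ideal_pow I n) UNIV"

text \<open>Degree-t component of H^0_{G_+}(G_I(M)), represented by its preimage in I^t M:
  a class [x] in G_t = I^tM/I^{t+1}M is killed by a power of G_+ iff for some k,
  all homogeneous elements [a] in G_j (j \<ge> k, a in I^j) satisfy [a][x] = 0 in G_{t+j},
  i.e. a x in I^{t+j+1} M (G_+^k = the sum of the G_j with j \<ge> k, as G is standard graded).\<close>
definition H0_comp :: "('a::comm_ring_1 \<Rightarrow> 'b::ab_group_add \<Rightarrow> 'b) \<Rightarrow> 'a set \<Rightarrow> nat \<Rightarrow> 'b set" where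
  "H0_comp scale I t = {x \<in> filt scale I t. \<exists>k. \<forall>j\<ge>k. \<forall>a\<in>ideal_pow I j.
      scale a x \<in> filt scale I (t + j + 1)}"

text \<open>h of G_I(M)/H^0_{G_+}(G_I(M)) at t: length of G_t / H^0_t = I^tM / H0_comp t.\<close>
definition h_Gbar :: "('a::comm_ring_1 \<Rightarrow> 'b::ab_group_add \<Rightarrow> 'b) \<Rightarrow> 'a set \<Rightarrow> nat \<Rightarrow> enat" where
  "h_Gbar scale I t = mlength scale (H0_comp scale I t) (filt scale I t)"

end

theory Submission
  imports Defs
begin

text \<open>Let H be the preimage in M of the degree-0 part of the G+-torsion of G_I(M), so that
  h(0) is the length of M/H. The chain H < H + m^(b-1)M < ... < H + mM < M has length b,
  and it is strict. First, m^(b-1)M is not contained in H: otherwise, by Noetherianity, a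
  single power I^k satisfies I^k m^(b-1)M \<subseteq> I^(k+1)M \<subseteq> I^k m^b M = m (I^k m^(b-1)M),
  so Nakayama gives I^k m^(b-1)M = 0; then m is the only prime containing Ann M, and
  dim M = 0. Second, if m^i M \<subseteq> H + m^(i+1)M, multiplying by m repeatedly gives
  m^i M \<subseteq> H + m^(i+n)M for all n; since m^n M \<subseteq> IM \<subseteq> H for large n, this forces
  m^i M \<subseteq> H, contradicting the first step. The residue field need not be infinite.\<close>

section \<open>Ideals\<close>

context module
begin

lemma subspace_scale_preimage: "subspace T \<Longrightarrow> subspace {z. scale a z \<in> T}"
  unfolding subspace_def
  by (auto simp del: scale_scale simp: scale_right_distrib) (metis scale_left_commute)

lemma ideal_scale_preimage: "subspace T \<Longrightarrow> ideal {c. scale c x \<in> T}"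
  unfolding subspace_def ideal_def
  by (auto simp del: scale_scale simp: scale_left_distrib) (metis scale_scale)

end

interpretation R: module "(*) :: 'a::comm_ring_1 \<Rightarrow> 'a \<Rightarrow> 'a"
  by standard (auto simp: algebra_simps)

text \<open>For \<open>R\<close>, \<open>scale_scale\<close> is associativity read backwards and would fight \<open>algebra_simps\<close>.\<close>
declare R.scale_scale[simp del]

lemma ideal_iff_subspace: "ideal = R.subspace"
  by (auto simp: fun_eq_iff ideal_def R.subspace_def)

lemma ideal_hull_eq_span: "ideal hull S = R.span S"
  by (simp add: ideal_iff_subspace R.span_def)

lemma ideal_span [simp]: "ideal (R.span S)"
  by (simp add: ideal_iff_subspace)

lemma ideal_UNIV [simp]: "ideal UNIV"
  by (simp add: ideal_def)

lemma ideal_zero: "ideal J \<Longrightarrow> 0 \<in> J"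
  by (simp add: ideal_def)

lemma ideal_add: "ideal J \<Longrightarrow> x \<in> J \<Longrightarrow> y \<in> J \<Longrightarrow> x + y \<in> J"
  by (simp add: ideal_def)

lemma ideal_mult_left: "ideal J \<Longrightarrow> c \<in> J \<Longrightarrow> a * c \<in> J"
  by (simp add: ideal_def)

lemma ideal_mult_right: "ideal J \<Longrightarrow> c \<in> J \<Longrightarrow> c * a \<in> J"
  by (simp add: ideal_def mult.commute[of c])

lemma ideal_eq_UNIV_if_one: "ideal J \<Longrightarrow> 1 \<in> J \<Longrightarrow> J = UNIV"
  using ideal_mult_left[of J 1] by auto

lemma ideal_ideal_prod [simp]: "ideal (ideal_prod J K)"
  by (simp add: ideal_prod_def ideal_hull_eq_span)

lemma ideal_ideal_pow [simp]: "ideal (ideal_pow J n)"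
  by (cases n) simp_all

lemma ideal_prod_mem: "a \<in> J \<Longrightarrow> c \<in> K \<Longrightarrow> a * c \<in> ideal_prod J K"
  unfolding ideal_prod_def by (rule hull_inc) auto

lemma ideal_prod_least:
  "ideal L \<Longrightarrow> (\<And>a c. a \<in> J \<Longrightarrow> c \<in> K \<Longrightarrow> a * c \<in> L) \<Longrightarrow> ideal_prod J K \<subseteq> L"
  unfolding ideal_prod_def by (rule hull_minimal) auto

lemma ideal_prod_commute: "ideal_prod J K = ideal_prod K J"
  unfolding ideal_prod_def by (rule arg_cong[where f="(hull) ideal"]) (auto; metis mult.commute)

lemma ideal_prod_subset_right: "ideal K \<Longrightarrow> ideal_prod J K \<subseteq> K"
  by (rule ideal_prod_least) (auto intro: ideal_mult_left)

lemma ideal_pow_antimono: "k \<le> n \<Longrightarrow> ideal_pow J n \<subseteq> ideal_pow J k"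
proof (induction n)
  case (Suc n)
  have "ideal_pow J (Suc n) \<subseteq> ideal_pow J n"
    by (simp add: ideal_prod_subset_right)
  with Suc show ?case
    by (metis le_Suc_eq order_refl order_trans)
qed simp

lemma power_mem_ideal_pow: "a \<in> J \<Longrightarrow> a ^ n \<in> ideal_pow J n"
  by (induction n) (auto intro: ideal_prod_mem)

lemma prime_ideal_power_mem: "prime_ideal P \<Longrightarrow> x ^ n \<in> P \<Longrightarrow> x \<in> P"
proof (induction n)
  case 0
  then show ?case using ideal_eq_UNIV_if_one[of P] by (auto simp: prime_ideal_def)
qed (auto simp: prime_ideal_def)

lemma local_ring_ideal: "local_ring m \<Longrightarrow> ideal m"
  and local_ring_proper: "local_ring m \<Longrightarrow> m \<noteq> UNIV"
  by (auto simp: local_ring_def maximal_ideal_def)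

section \<open>Noetherian local rings\<close>

lemma noetherian_ringD:
  fixes f :: "nat \<Rightarrow> 'a::comm_ring_1 set"
  assumes "noetherian_ring TYPE('a)" and "\<And>n. ideal (f n)" and "\<And>n. f n \<subseteq> f (Suc n)"
  shows "\<exists>N. \<forall>n\<ge>N. f n = f N"
  using assms unfolding noetherian_ring_def by blast

lemma noetherian_maximal_element:
  assumes noeth: "noetherian_ring TYPE('a::comm_ring_1)"
    and "J0 \<in> F" and ideals: "\<And>J. J \<in> F \<Longrightarrow> ideal (J :: 'a set)"
  shows "\<exists>J\<in>F. \<forall>J'\<in>F. J \<subseteq> J' \<longrightarrow> J' = J"
proof (rule ccontr)
  assume "\<not> ?thesis"
  then have "\<forall>J\<in>F. \<exists>J'\<in>F. J \<subset> J'" by blast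
  then obtain next_ideal where next_ideal: "\<forall>J\<in>F. next_ideal J \<in> F \<and> J \<subset> next_ideal J"
    by metis
  define f where "f n = (next_ideal ^^ n) J0" for n
  have f_in: "f n \<in> F" for n
    by (induction n) (simp_all add: f_def \<open>J0 \<in> F\<close> next_ideal)
  have f_strict: "f n \<subset> f (Suc n)" for n
    using next_ideal f_in[of n] by (simp add: f_def)
  obtain N where "\<forall>n\<ge>N. f n = f N"
    using noetherian_ringD[OF noeth, of f] f_in ideals f_strict by (meson psubset_imp_subset)
  then have "f (Suc N) = f N" by (meson le_SucI order_refl)
  with f_strict[of N] show False by simp
qed

lemma noetherian_ideal_finite_span:
  assumes noeth: "noetherian_ring TYPE('a::comm_ring_1)" and J: "ideal (J :: 'a set)"
  shows "\<exists>G. finite G \<and> J = R.span G"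
proof -
  let ?F = "{R.span G | G. finite G \<and> G \<subseteq> J}"
  have "R.span {} \<in> ?F" by blast
  moreover have "\<And>K. K \<in> ?F \<Longrightarrow> ideal K" by auto
  ultimately obtain K where "K \<in> ?F" and max: "\<forall>K'\<in>?F. K \<subseteq> K' \<longrightarrow> K' = K"
    using noetherian_maximal_element[OF noeth] by meson
  then obtain G where G: "finite G" "G \<subseteq> J" "K = R.span G" by blast
  have "J \<subseteq> R.span G"
  proof
    fix x assume "x \<in> J"
    then have "R.span (insert x G) \<in> ?F" using G by blast
    moreover have "R.span G \<subseteq> R.span (insert x G)" by (rule R.span_mono) blast
    ultimately have "R.span (insert x G) = R.span G" using max G(3) by blast
    then show "x \<in> R.span G" by (metis R.span_base insertI1)
  qed
  moreover have "R.span G \<subseteq> J"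
    using G J by (intro R.span_minimal) (auto simp: ideal_iff_subspace)
  ultimately show ?thesis using G by blast
qed

lemma local_ring_one_minus_unit:
  assumes noeth: "noetherian_ring TYPE('a::comm_ring_1)" and local: "local_ring (m :: 'a set)"
    and "a \<in> m"
  shows "\<exists>u. u * (1 - a) = 1"
proof (rule ccontr)
  assume not_unit: "\<not> ?thesis"
  let ?F = "{K. ideal K \<and> K \<noteq> UNIV \<and> R.span {1 - a} \<subseteq> K}"
  have "1 \<notin> R.span {1 - a}" using not_unit by (auto simp: R.span_singleton)
  then have "R.span {1 - a} \<in> ?F" and "\<And>K. K \<in> ?F \<Longrightarrow> ideal K" by auto
  then obtain K where K: "K \<in> ?F" and max: "\<forall>K'\<in>?F. K \<subseteq> K' \<longrightarrow> K' = K"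
    using noetherian_maximal_element[OF noeth] by meson
  have "maximal_ideal K"
    unfolding maximal_ideal_def using K max by blast
  then have "K = m" using local by (auto simp: local_ring_def)
  then have "1 - a \<in> m" using K by (auto intro: R.span_base)
  then have "(1 - a) + a \<in> m"
    using ideal_add[OF local_ring_ideal[OF local]] \<open>a \<in> m\<close> by blast
  then have "m = UNIV" using ideal_eq_UNIV_if_one[OF local_ring_ideal[OF local]] by simp
  with local_ring_proper[OF local] show False by contradiction
qed

definition power_sum_ideal :: "'a::comm_ring_1 \<Rightarrow> 'a set \<Rightarrow> nat \<Rightarrow> 'a set" where
  "power_sum_ideal x J p = R.span {x ^ t * y | t y. t \<le> p \<and> y \<in> ideal_pow J (p - t)}"

lemma power_sum_ideal_generator:
  "t \<le> p \<Longrightarrow> y \<in> ideal_pow J (p - t) \<Longrightarrow> x ^ t * y \<in> power_sum_ideal x J p"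
  unfolding power_sum_ideal_def by (rule R.span_base) blast

lemma power_sum_ideal_mult:
  assumes a: "a - r * x \<in> J" and c: "c \<in> power_sum_ideal x J p"
  shows "a * c \<in> power_sum_ideal x J (Suc p)"
proof -
  have "power_sum_ideal x J p \<subseteq> {c. a * c \<in> power_sum_ideal x J (Suc p)}"
    unfolding power_sum_ideal_def[of x J p]
  proof (rule R.span_minimal)
    show "R.subspace {c. a * c \<in> power_sum_ideal x J (Suc p)}"
      by (rule R.subspace_scale_preimage) (simp add: power_sum_ideal_def)
  next
    show "{x ^ t * z | t z. t \<le> p \<and> z \<in> ideal_pow J (p - t)}
        \<subseteq> {c. a * c \<in> power_sum_ideal x J (Suc p)}"
    proof safe
      fix t z assume t: "t \<le> p" and z: "z \<in> ideal_pow J (p - t)"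
      define y where "y = a - r * x"
      have shifted: "x ^ Suc t * z \<in> power_sum_ideal x J (Suc p)"
        using t z by (intro power_sum_ideal_generator) simp_all
      have "y * z \<in> ideal_pow J (Suc p - t)"
        using ideal_prod_mem[OF a[folded y_def] z] t by (simp add: Suc_diff_le)
      then have absorbed: "x ^ t * (y * z) \<in> power_sum_ideal x J (Suc p)"
        using t by (intro power_sum_ideal_generator) simp_all
      have "a * (x ^ t * z) = r * (x ^ Suc t * z) + x ^ t * (y * z)"
        by (simp add: y_def algebra_simps)
      also have "\<dots> \<in> power_sum_ideal x J (Suc p)"
        using R.span_add[OF R.span_scale[OF shifted[unfolded power_sum_ideal_def]]
            absorbed[unfolded power_sum_ideal_def]]
        by (simp add: power_sum_ideal_def)
      finally show "a * (x ^ t * z) \<in> power_sum_ideal x J (Suc p)" .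
    qed
  qed
  with c show ?thesis by blast
qed

lemma ideal_pow_span_insert_subset:
  "ideal_pow (R.span (insert x G)) p \<subseteq> power_sum_ideal x (R.span G) p"
proof (induction p)
  case 0
  have "x ^ 0 * 1 \<in> power_sum_ideal x (R.span G) 0"
    by (rule power_sum_ideal_generator) auto
  then show ?case
    by (simp add: power_sum_ideal_def ideal_eq_UNIV_if_one)
next
  case (Suc p)
  show ?case
    unfolding ideal_pow.simps
  proof (rule ideal_prod_least)
    fix a c assume "a \<in> R.span (insert x G)" and "c \<in> ideal_pow (R.span (insert x G)) p"
    then show "a * c \<in> power_sum_ideal x (R.span G) (Suc p)"
      using Suc.IH by (auto simp: R.span_breakdown_eq intro: power_sum_ideal_mult)
  qed (simp add: power_sum_ideal_def)
qed

lemma power_sum_ideal_subset: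
  assumes I: "ideal I" and Jn: "ideal_pow J n \<subseteq> I" and xk: "x ^ k \<in> I"
  shows "power_sum_ideal x J (n + k) \<subseteq> I"
  unfolding power_sum_ideal_def
proof (rule R.span_minimal)
  show "{x ^ t * y | t y. t \<le> n + k \<and> y \<in> ideal_pow J (n + k - t)} \<subseteq> I"
  proof safe
    fix t y assume "t \<le> n + k" and y: "y \<in> ideal_pow J (n + k - t)"
    show "x ^ t * y \<in> I"
    proof (cases "k \<le> t")
      case True
      then have "x ^ t = x ^ (t - k) * x ^ k" by (simp flip: power_add)
      then show ?thesis using xk I by (simp add: ideal_mult_left ideal_mult_right)
    next
      case False
      then have "y \<in> ideal_pow J n" using y ideal_pow_antimono[of n "n + k - t" J] by force
      then show ?thesis using Jn I by (auto intro: ideal_mult_left)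
    qed
  qed
qed (use I in \<open>simp add: ideal_iff_subspace\<close>)

lemma ideal_pow_span_subset_if_powers:
  assumes I: "ideal I" and "finite G" and "\<forall>g\<in>G. \<exists>k. g ^ k \<in> I"
  shows "\<exists>n. ideal_pow (R.span G) n \<subseteq> I"
  using assms(2,3)
proof (induction G rule: finite_induct)
  case empty
  have "ideal_pow (R.span {}) 1 \<subseteq> {0}"
    by (simp, rule ideal_prod_least) (auto simp: ideal_def)
  then show ?case using ideal_zero[OF I] by blast
next
  case (insert x G)
  then obtain n k where "ideal_pow (R.span G) n \<subseteq> I" and "x ^ k \<in> I" by auto
  then show ?case
    using ideal_pow_span_insert_subset power_sum_ideal_subset[OF I] by blast
qed

lemma noetherian_ideal_pow_subset_radical:
  assumes "noetherian_ring TYPE('a::comm_ring_1)" and "ideal (J :: 'a set)" and "ideal I"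
    and "J \<subseteq> radical I"
  shows "\<exists>n. ideal_pow J n \<subseteq> I"
proof -
  obtain G where "finite G" and J: "J = R.span G"
    using noetherian_ideal_finite_span assms(1,2) by blast
  moreover have "\<forall>g\<in>G. \<exists>k. g ^ k \<in> I"
    using J \<open>J \<subseteq> radical I\<close> by (auto simp: radical_def dest: R.span_base)
  ultimately show ?thesis using ideal_pow_span_subset_if_powers[OF \<open>ideal I\<close>] by simp
qed

lemma prime_ideal_eq_if_contains_product:
  assumes local: "local_ring m" and rad: "radical I = m"
    and P: "prime_ideal P" and sub: "ideal_prod (ideal_pow I k) (ideal_pow m n) \<subseteq> P"
  shows "P = m"
proof -
  have "m \<subseteq> P"
  proof
    fix c assume "c \<in> m"
    show "c \<in> P"
    proof (cases "I \<subseteq> P")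
      case True
      with \<open>c \<in> m\<close> rad show ?thesis
        by (auto simp: radical_def intro: prime_ideal_power_mem[OF P])
    next
      case False
      then obtain a where "a \<in> I" and "a \<notin> P" by blast
      then have "a ^ k * c ^ n \<in> P"
        using \<open>c \<in> m\<close> sub by (blast intro: ideal_prod_mem power_mem_ideal_pow)
      with \<open>a \<notin> P\<close> show ?thesis
        using P by (auto simp: prime_ideal_def dest: prime_ideal_power_mem[OF P])
    qed
  qed
  with local P show "P = m"
    by (auto simp: local_ring_def maximal_ideal_def prime_ideal_def)
qed

lemma krull_dim_quot_le_zero:
  assumes "\<And>P. prime_ideal P \<Longrightarrow> J \<subseteq> P \<Longrightarrow> P = m"
  shows "krull_dim_quot J \<le> 0"
  unfolding krull_dim_quot_def
proof (rule Sup_least, clarify)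
  fix n and P :: "nat \<Rightarrow> 'a set"
  assume primes: "\<forall>i\<le>n. prime_ideal (P i) \<and> J \<subseteq> P i" and strict: "\<forall>i<n. P i \<subset> P (Suc i)"
  show "enat n \<le> 0"
  proof (cases n)
    case (Suc n')
    then have "P 0 = m" and "P (Suc 0) = m" and "P 0 \<subset> P (Suc 0)"
      using primes strict assms by auto
    then show ?thesis by simp
  qed (simp add: zero_enat_def)
qed

section \<open>Products of ideals and modules; Nakayama's lemma\<close>

context module
begin

lemma submod_eq_subspace: "submod scale = subspace"
  by (auto simp: fun_eq_iff submod_def subspace_def)

lemma idmul_eq_span: "idmul scale J N = span {scale a x | a x. a \<in> J \<and> x \<in> N}"
  by (simp add: idmul_def submod_eq_subspace span_def)

lemma subspace_idmul [simp]: "subspace (idmul scale J N)"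
  by (simp add: idmul_eq_span)

lemma scale_mem_idmul: "a \<in> J \<Longrightarrow> x \<in> N \<Longrightarrow> scale a x \<in> idmul scale J N"
  unfolding idmul_eq_span by (rule span_base) auto

lemma idmul_least:
  "subspace S \<Longrightarrow> (\<And>a x. a \<in> J \<Longrightarrow> x \<in> N \<Longrightarrow> scale a x \<in> S) \<Longrightarrow> idmul scale J N \<subseteq> S"
  unfolding idmul_eq_span by (rule span_minimal) auto

lemma idmul_mono: "J \<subseteq> J' \<Longrightarrow> N \<subseteq> N' \<Longrightarrow> idmul scale J N \<subseteq> idmul scale J' N'"
  by (rule idmul_least) (auto intro: scale_mem_idmul)

lemma idmul_UNIV_UNIV: "idmul scale UNIV UNIV = UNIV"
  using scale_mem_idmul[of 1 UNIV _ UNIV] by auto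

lemma scale_mem_idmul_ideal_prod:
  assumes "a \<in> J" and "z \<in> idmul scale K UNIV"
  shows "scale a z \<in> idmul scale (ideal_prod J K) UNIV"
proof -
  have "idmul scale K UNIV \<subseteq> {z. scale a z \<in> idmul scale (ideal_prod J K) UNIV}"
  proof (rule idmul_least)
    fix c x assume "c \<in> K"
    then have "scale (a * c) x \<in> idmul scale (ideal_prod J K) UNIV"
      using \<open>a \<in> J\<close> by (intro scale_mem_idmul ideal_prod_mem) auto
    then show "scale c x \<in> {z. scale a z \<in> idmul scale (ideal_prod J K) UNIV}" by simp
  qed (intro subspace_scale_preimage subspace_idmul)
  with \<open>z \<in> idmul scale K UNIV\<close> show ?thesis by blast
qed

lemma idmul_ideal_prod: "idmul scale (ideal_prod J K) UNIV = idmul scale J (idmul scale K UNIV)"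
proof
  show "idmul scale (ideal_prod J K) UNIV \<subseteq> idmul scale J (idmul scale K UNIV)"
  proof (rule idmul_least[OF subspace_idmul])
    fix c x assume "c \<in> ideal_prod J K"
    moreover have "ideal_prod J K \<subseteq> {c. scale c x \<in> idmul scale J (idmul scale K UNIV)}"
    proof (rule ideal_prod_least)
      fix a d assume "a \<in> J" and "d \<in> K"
      then have "scale a (scale d x) \<in> idmul scale J (idmul scale K UNIV)"
        by (intro scale_mem_idmul) auto
      then show "a * d \<in> {c. scale c x \<in> idmul scale J (idmul scale K UNIV)}" by simp
    qed (intro ideal_scale_preimage subspace_idmul)
    ultimately show "scale c x \<in> idmul scale J (idmul scale K UNIV)" by blast
  qed
  show "idmul scale J (idmul scale K UNIV) \<subseteq> idmul scale (ideal_prod J K) UNIV"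
    by (rule idmul_least[OF subspace_idmul]) (rule scale_mem_idmul_ideal_prod)
qed

lemma idmul_swap: "idmul scale J (idmul scale K N) \<subseteq> idmul scale K (idmul scale J N)"
proof (rule idmul_least[OF subspace_idmul])
  fix a z assume "a \<in> J" and "z \<in> idmul scale K N"
  moreover have "idmul scale K N \<subseteq> {z. scale a z \<in> idmul scale K (idmul scale J N)}"
  proof (rule idmul_least)
    fix c y assume "c \<in> K" and "y \<in> N"
    then have "scale c (scale a y) \<in> idmul scale K (idmul scale J N)"
      using \<open>a \<in> J\<close> by (intro scale_mem_idmul) auto
    then show "scale c y \<in> {z. scale a z \<in> idmul scale K (idmul scale J N)}"
      by (simp only: mem_Collect_eq scale_left_commute[of a c])
  qed (intro subspace_scale_preimage subspace_idmul)
  ultimately show "scale a z \<in> idmul scale K (idmul scale J N)" by blast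
qed

lemma idmul_UNIV_subset_span:
  assumes S: "span S = UNIV" and J: "J = R.span G"
  shows "idmul scale J UNIV \<subseteq> span {scale g s | g s. g \<in> G \<and> s \<in> S}"
proof (rule idmul_least[OF subspace_span])
  let ?T = "span {scale g s | g s. g \<in> G \<and> s \<in> S}"
  fix c x assume "c \<in> J"
  have "J \<subseteq> {c. scale c s \<in> ?T}" if "s \<in> S" for s
    unfolding J using that
    by (intro R.span_minimal) (auto intro: span_base simp flip: ideal_iff_subspace intro!: ideal_scale_preimage)
  then have "span S \<subseteq> {x. scale c x \<in> ?T}"
    using \<open>c \<in> J\<close> by (intro span_minimal subspace_scale_preimage subspace_span) auto
  then show "scale c x \<in> ?T" using S by auto
qed

lemma idmul_finite_span:
  assumes noeth: "noetherian_ring TYPE('a)" and "fin_gen scale" and "ideal J"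
  shows "\<exists>T. finite T \<and> idmul scale J UNIV = span T"
proof -
  obtain S where "finite S" and S: "span S = UNIV"
    using \<open>fin_gen scale\<close> by (auto simp: fin_gen_def submod_eq_subspace span_def)
  obtain G where "finite G" and G: "J = R.span G"
    using noetherian_ideal_finite_span[OF noeth \<open>ideal J\<close>] by blast
  define T where "T = {scale g s | g s. g \<in> G \<and> s \<in> S}"
  have "T = (\<lambda>(g, s). scale g s) ` (G \<times> S)" by (auto simp: T_def)
  then have "finite T" using \<open>finite G\<close> \<open>finite S\<close> by simp
  moreover have "idmul scale J UNIV = span T"
  proof
    show "idmul scale J UNIV \<subseteq> span T"
      unfolding T_def by (rule idmul_UNIV_subset_span[OF S G])
    show "span T \<subseteq> idmul scale J UNIV"
      unfolding T_def G by (rule span_minimal) (auto intro!: scale_mem_idmul R.span_base)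
  qed
  ultimately show ?thesis by blast
qed

lemma idmul_span_insert_subset:
  assumes m: "ideal m"
  shows "idmul scale m (span (insert g S)) \<subseteq> {v. \<exists>a\<in>m. v - scale a g \<in> span S}"
proof (rule idmul_least)
  show "subspace {v. \<exists>a\<in>m. v - scale a g \<in> span S}"
    unfolding subspace_def
  proof (intro conjI ballI allI)
    show "0 \<in> {v. \<exists>a\<in>m. v - scale a g \<in> span S}"
      using m by (auto intro!: bexI[of _ 0] simp: ideal_zero span_zero)
  next
    fix x y assume "x \<in> {v. \<exists>a\<in>m. v - scale a g \<in> span S}" "y \<in> {v. \<exists>a\<in>m. v - scale a g \<in> span S}"
    then obtain a1 a2 where "a1 \<in> m" "x - scale a1 g \<in> span S" "a2 \<in> m" "y - scale a2 g \<in> span S"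
      by blast
    moreover have "x + y - scale (a1 + a2) g = (x - scale a1 g) + (y - scale a2 g)"
      by (simp add: scale_left_distrib)
    ultimately show "x + y \<in> {v. \<exists>a\<in>m. v - scale a g \<in> span S}"
      using ideal_add[OF m] span_add by (metis (mono_tags, lifting) mem_Collect_eq)
  next
    fix c x assume "x \<in> {v. \<exists>a\<in>m. v - scale a g \<in> span S}"
    then obtain a where "a \<in> m" "x - scale a g \<in> span S" by blast
    moreover have "scale c x - scale (c * a) g = scale c (x - scale a g)"
      by (simp add: scale_right_diff_distrib)
    ultimately show "scale c x \<in> {v. \<exists>a\<in>m. v - scale a g \<in> span S}"
      using m by (auto intro!: bexI[of _ "c * a"] ideal_mult_left span_scale)
  qed
next
  fix a x assume "a \<in> m" and "x \<in> span (insert g S)"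
  then obtain r where "x - scale r g \<in> span S" by (auto simp: span_breakdown_eq)
  moreover have "scale a x - scale (a * r) g = scale a (x - scale r g)"
    by (simp add: scale_right_diff_distrib)
  ultimately show "scale a x \<in> {v. \<exists>a\<in>m. v - scale a g \<in> span S}"
    using m \<open>a \<in> m\<close> by (auto intro!: bexI[of _ "a * r"] ideal_mult_right span_scale)
qed

lemma nakayama:
  assumes noeth: "noetherian_ring TYPE('a)" and local: "local_ring m"
    and "finite S" and "span S \<subseteq> idmul scale m (span S)"
  shows "span S = {0}"
  using assms(3,4)
proof (induction S rule: finite_induct)
  case (insert g S)
  have "g \<in> idmul scale m (span (insert g S))"
    using insert.prems span_base[of g "insert g S"] by blast
  then obtain a where "a \<in> m" and a: "g - scale a g \<in> span S"
    using idmul_span_insert_subset[OF local_ring_ideal[OF local]] by blast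
  obtain u where u: "u * (1 - a) = 1"
    using local_ring_one_minus_unit[OF noeth local \<open>a \<in> m\<close>] by blast
  have "g = scale (u * (1 - a)) g" using u by simp
  also have "\<dots> = scale u (g - scale a g)"
    by (simp only: scale_scale[symmetric] scale_left_diff_distrib scale_one)
  also have "\<dots> \<in> span S" using a by (rule span_scale)
  finally have "span (insert g S) = span S"
    unfolding span_def by (rule hull_redundant)
  with insert show ?case by simp
qed simp

lemma idmul_eq_zero_if_subset_idmul_max:
  assumes noeth: "noetherian_ring TYPE('a)" and local: "local_ring m"
    and "fin_gen scale" and "ideal J"
    and "idmul scale J UNIV \<subseteq> idmul scale m (idmul scale J UNIV)"
  shows "idmul scale J UNIV = {0}"
  using idmul_finite_span[OF noeth \<open>fin_gen scale\<close> \<open>ideal J\<close>] nakayama[OF noeth local] assms(5)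
  by metis

section \<open>Adic filtrations and chains of submodules\<close>

lemma mlength_lower_bound:
  assumes "C 0 = N'" and "C n = N" and "\<And>i. i \<le> n \<Longrightarrow> subspace (C i)"
    and "\<And>i. i < n \<Longrightarrow> C i \<subset> C (Suc i)"
  shows "enat n \<le> mlength scale N' N"
  unfolding mlength_def by (rule Sup_upper) (use assms in \<open>auto simp: submod_eq_subspace\<close>)

lemma filt_0: "filt scale J 0 = UNIV"
  by (simp add: filt_def idmul_UNIV_UNIV)

lemma filt_Suc: "filt scale J (Suc n) = idmul scale J (filt scale J n)"
  by (simp add: filt_def idmul_ideal_prod)

lemma subspace_filt [simp]: "subspace (filt scale J n)"
  by (simp add: filt_def)

lemma filt_antimono: "k \<le> n \<Longrightarrow> filt scale J n \<subseteq> filt scale J k"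
  by (simp add: filt_def idmul_mono ideal_pow_antimono)

lemma idmul_subset_span_Un:
  assumes H: "subspace H" and N: "N \<subseteq> span (H \<union> N')"
  shows "idmul scale J N \<subseteq> span (H \<union> idmul scale J N')"
proof (rule idmul_least[OF subspace_span])
  fix a x assume "a \<in> J" and "x \<in> N"
  have "H \<union> N' \<subseteq> {x. scale a x \<in> span (H \<union> idmul scale J N')}"
    using \<open>a \<in> J\<close> subspace_scale[OF H] by (auto intro: span_base scale_mem_idmul)
  then have "span (H \<union> N') \<subseteq> {x. scale a x \<in> span (H \<union> idmul scale J N')}"
    by (intro span_minimal subspace_scale_preimage subspace_span)
  with \<open>x \<in> N\<close> N show "scale a x \<in> span (H \<union> idmul scale J N')" by blast
qed

lemma filt_subset_span_shift:
  assumes H: "subspace H" and step: "filt scale J i \<subseteq> span (H \<union> filt scale J (Suc i))"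
  shows "filt scale J i \<subseteq> span (H \<union> filt scale J (i + n))"
proof (induction n)
  case (Suc n)
  have "filt scale J (Suc i) \<subseteq> span (H \<union> filt scale J (Suc (i + n)))"
    using idmul_subset_span_Un[OF H Suc.IH] by (simp add: filt_Suc)
  then have "H \<union> filt scale J (Suc i) \<subseteq> span (H \<union> filt scale J (i + Suc n))"
    using span_superset[of "H \<union> filt scale J (i + Suc n)"] by auto
  then have "span (H \<union> filt scale J (Suc i)) \<subseteq> span (H \<union> filt scale J (i + Suc n))"
    by (rule span_minimal[OF _ subspace_span])
  with step show ?case by blast
qed (auto intro: span_base)

lemma filt_not_subset_span_Suc:
  assumes H: "subspace H" and "filt scale J n \<subseteq> H" and "\<not> filt scale J i \<subseteq> H"
  shows "\<not> filt scale J i \<subseteq> span (H \<union> filt scale J (Suc i))"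
proof
  assume "filt scale J i \<subseteq> span (H \<union> filt scale J (Suc i))"
  then have "filt scale J i \<subseteq> span (H \<union> filt scale J (i + n))"
    by (rule filt_subset_span_shift[OF H])
  also have "H \<union> filt scale J (i + n) \<subseteq> H"
    using filt_antimono[of n "i + n" J] \<open>filt scale J n \<subseteq> H\<close> by auto
  then have "span (H \<union> filt scale J (i + n)) \<subseteq> H"
    using H by (simp add: span_minimal)
  finally show False using \<open>\<not> filt scale J i \<subseteq> H\<close> by contradiction
qed

lemma mlength_ge_filt_chain:
  assumes H: "subspace H" and "filt scale J n \<subseteq> H" and not_sub: "\<not> filt scale J c \<subseteq> H"
  shows "enat (Suc c) \<le> mlength scale H UNIV"
proof (rule mlength_lower_bound)
  define C where "C i = (if i = 0 then H else span (H \<union> filt scale J (Suc c - i)))" for i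
  show "C 0 = H" and "C (Suc c) = UNIV" and "\<And>i. subspace (C i)"
    using H by (simp_all add: C_def filt_0)
  show "C i \<subset> C (Suc i)" if "i < Suc c" for i
  proof (cases i)
    case 0
    have "filt scale J c \<subseteq> C (Suc 0)" by (auto simp: C_def intro: span_base)
    moreover have "C 0 \<subseteq> C (Suc 0)" by (auto simp: C_def intro: span_base)
    ultimately show ?thesis using not_sub 0 by (auto simp: C_def)
  next
    case (Suc i')
    define l where "l = c - Suc i'"
    have Ci: "C i = span (H \<union> filt scale J (Suc l))" and CSi: "C (Suc i) = span (H \<union> filt scale J l)"
      using \<open>i < Suc c\<close> by (simp_all add: C_def l_def Suc Suc_diff_Suc)
    have "\<not> filt scale J l \<subseteq> H"
      using not_sub filt_antimono[of l c J] by (auto simp: l_def)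
    then have "\<not> filt scale J l \<subseteq> C i"
      unfolding Ci by (rule filt_not_subset_span_Suc[OF H assms(2)])
    moreover have "filt scale J l \<subseteq> C (Suc i)"
      unfolding CSi by (auto intro: span_base)
    moreover have "C i \<subseteq> C (Suc i)"
      unfolding Ci CSi by (intro span_mono Un_mono filt_antimono) auto
    ultimately show ?thesis by blast
  qed
qed

end

section \<open>The degree-0 part of the \<open>G\<^sub>+\<close>-torsion\<close>

text \<open>Elements of \<open>M\<close> whose class in \<open>G\<^sub>0\<close> is killed by \<open>G\<^sub>j\<close> for all \<open>j \<ge> k\<close>;
  by \<open>H0_comp_0_eq\<close> their union over \<open>k\<close> is \<open>H0_comp scale I 0\<close>.\<close>
definition H0_stage :: "('a::comm_ring_1 \<Rightarrow> 'b::ab_group_add \<Rightarrow> 'b) \<Rightarrow> 'a set \<Rightarrow> nat \<Rightarrow> 'b set" where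
  "H0_stage scale I k = {x. \<forall>j\<ge>k. \<forall>a\<in>ideal_pow I j. scale a x \<in> filt scale I (Suc j)}"

context module
begin

lemma subspace_H0_stage: "subspace (H0_stage scale I k)"
proof -
  have "H0_stage scale I k = (\<Inter>j\<in>{k..}. \<Inter>a\<in>ideal_pow I j. {x. scale a x \<in> filt scale I (Suc j)})"
    by (auto simp: H0_stage_def)
  then show ?thesis
    by (simp add: subspace_Int subspace_scale_preimage)
qed

lemma H0_stage_mono: "k \<le> k' \<Longrightarrow> H0_stage scale I k \<subseteq> H0_stage scale I k'"
  by (auto simp: H0_stage_def)

lemma H0_comp_0_eq: "H0_comp scale I 0 = (\<Union>k. H0_stage scale I k)"
  by (auto simp: H0_comp_def H0_stage_def filt_0)

lemma subspace_H0_comp_0: "subspace (H0_comp scale I 0)"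
  unfolding subspace_def H0_comp_0_eq
proof (intro conjI ballI allI)
  show "0 \<in> (\<Union>k. H0_stage scale I k)"
    using subspace_0[OF subspace_H0_stage] by blast
next
  fix x y assume "x \<in> (\<Union>k. H0_stage scale I k)" and "y \<in> (\<Union>k. H0_stage scale I k)"
  then obtain k k' where "x \<in> H0_stage scale I (max k k')" and "y \<in> H0_stage scale I (max k k')"
    using H0_stage_mono[of _ "max _ _"] by (metis UN_E max.cobounded1 max.cobounded2 subsetD)
  then show "x + y \<in> (\<Union>k. H0_stage scale I k)"
    using subspace_add[OF subspace_H0_stage] by blast
next
  fix c x assume "x \<in> (\<Union>k. H0_stage scale I k)"
  then show "scale c x \<in> (\<Union>k. H0_stage scale I k)"
    using subspace_scale[OF subspace_H0_stage] by blast
qed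

lemma idmul_subset_H0_comp_0: "idmul scale I UNIV \<subseteq> H0_comp scale I 0"
proof -
  have "idmul scale I UNIV \<subseteq> H0_stage scale I 0"
  proof (clarsimp simp: H0_stage_def)
    fix x j a assume "x \<in> idmul scale I UNIV" and "a \<in> ideal_pow I j"
    then have "scale a x \<in> idmul scale (ideal_prod (ideal_pow I j) I) UNIV"
      by (rule scale_mem_idmul_ideal_prod[rotated])
    then show "scale a x \<in> filt scale I (Suc j)"
      by (simp add: filt_def ideal_prod_commute)
  qed
  then show ?thesis by (auto simp: H0_comp_0_eq)
qed

lemma H0_stage_uniform_element:
  assumes noeth: "noetherian_ring TYPE('a)" and H0: "\<forall>c\<in>J. scale c g \<in> H0_comp scale I 0"
  shows "\<exists>k. \<forall>c\<in>J. scale c g \<in> H0_stage scale I k"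
proof -
  define L where "L k = {c. scale c g \<in> H0_stage scale I k}" for k
  have "ideal (L k)" for k
    by (simp add: L_def ideal_scale_preimage subspace_H0_stage)
  moreover have "L k \<subseteq> L (Suc k)" for k
    using H0_stage_mono[of k "Suc k" I] by (auto simp: L_def)
  ultimately obtain N where N: "\<forall>k\<ge>N. L k = L N"
    using noetherian_ringD[OF noeth] by blast
  have "c \<in> L N" if "c \<in> J" for c
  proof -
    obtain k where "c \<in> L k" using H0 \<open>c \<in> J\<close> by (auto simp: L_def H0_comp_0_eq)
    then have "c \<in> L (max k N)" using H0_stage_mono[of k "max k N" I] by (auto simp: L_def)
    with N show ?thesis by (metis max.cobounded2)
  qed
  then show ?thesis by (auto simp: L_def)
qed

lemma H0_stage_uniform:
  assumes noeth: "noetherian_ring TYPE('a)" and "fin_gen scale" and J: "ideal J"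
    and H0: "idmul scale J UNIV \<subseteq> H0_comp scale I 0"
  shows "\<exists>k. idmul scale J UNIV \<subseteq> H0_stage scale I k"
proof -
  obtain S where "finite S" and S: "span S = UNIV"
    using \<open>fin_gen scale\<close> by (auto simp: fin_gen_def submod_eq_subspace span_def)
  have "\<forall>s\<in>S. \<exists>k. \<forall>c\<in>J. scale c s \<in> H0_stage scale I k"
    using H0 scale_mem_idmul[of _ J _ UNIV] by (blast intro: H0_stage_uniform_element[OF noeth])
  then obtain stage where stage: "\<forall>s\<in>S. \<forall>c\<in>J. scale c s \<in> H0_stage scale I (stage s)"
    by metis
  obtain k where "\<forall>s\<in>S. stage s \<le> k"
    using \<open>finite S\<close> finite_nat_set_iff_bounded_le by (metis finite_imageI image_eqI)
  with stage have gens: "\<forall>s\<in>S. \<forall>c\<in>J. scale c s \<in> H0_stage scale I k"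
    using H0_stage_mono by blast
  have "idmul scale J UNIV \<subseteq> span {scale c s | c s. c \<in> J \<and> s \<in> S}"
    using J by (intro idmul_UNIV_subset_span[OF S]) (metis R.span_eq_iff ideal_iff_subspace)
  also have "\<dots> \<subseteq> H0_stage scale I k"
    using gens by (intro span_minimal subspace_H0_stage) blast
  finally show ?thesis ..
qed

lemma idmul_H0_stage_subset_idmul_max:
  assumes "filt scale m c \<subseteq> H0_stage scale I k"
    and "idmul scale I UNIV \<subseteq> filt scale m (Suc c)"
  shows "idmul scale (ideal_pow I k) (filt scale m c)
      \<subseteq> idmul scale m (idmul scale (ideal_pow I k) (filt scale m c))"
proof -
  have "idmul scale (ideal_pow I k) (filt scale m c) \<subseteq> filt scale I (Suc k)"
    using assms(1) by (intro idmul_least subspace_filt) (auto simp: H0_stage_def)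
  also have "\<dots> = idmul scale (ideal_pow I k) (idmul scale I UNIV)"
    by (simp add: filt_def ideal_prod_commute[of I] idmul_ideal_prod)
  also have "\<dots> \<subseteq> idmul scale (ideal_pow I k) (idmul scale m (filt scale m c))"
    using assms(2) by (simp add: idmul_mono filt_Suc)
  also have "\<dots> \<subseteq> idmul scale m (idmul scale (ideal_pow I k) (filt scale m c))"
    by (rule idmul_swap)
  finally show ?thesis .
qed

lemma filt_not_subset_H0_comp_0:
  assumes noeth: "noetherian_ring TYPE('a)" and local: "local_ring m" and rad: "radical I = m"
    and fin: "fin_gen scale" and dim: "0 < module_dim scale"
    and IM: "idmul scale I UNIV \<subseteq> filt scale m (Suc c)"
  shows "\<not> filt scale m c \<subseteq> H0_comp scale I 0"
proof
  assume "filt scale m c \<subseteq> H0_comp scale I 0"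
  then obtain k where stage: "filt scale m c \<subseteq> H0_stage scale I k"
    using H0_stage_uniform[OF noeth fin ideal_ideal_pow] unfolding filt_def by blast
  let ?J = "ideal_prod (ideal_pow I k) (ideal_pow m c)"
  have "idmul scale ?J UNIV = idmul scale (ideal_pow I k) (filt scale m c)"
    by (simp add: filt_def idmul_ideal_prod)
  then have "idmul scale ?J UNIV \<subseteq> idmul scale m (idmul scale ?J UNIV)"
    using idmul_H0_stage_subset_idmul_max[OF stage IM] by simp
  then have "idmul scale ?J UNIV = {0}"
    by (rule idmul_eq_zero_if_subset_idmul_max[OF noeth local fin ideal_ideal_prod])
  then have "?J \<subseteq> ann scale"
    using scale_mem_idmul[of _ ?J _ UNIV] by (auto simp: ann_def)
  then have "module_dim scale \<le> 0"
    unfolding module_dim_def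
    by (intro krull_dim_quot_le_zero[where m = m])
      (meson prime_ideal_eq_if_contains_product[OF local rad] order.trans)
  with dim show False by simp
qed

end

theorem lemma2p7:
  fixes scale :: "'a::comm_ring_1 \<Rightarrow> 'b::ab_group_add \<Rightarrow> 'b"
    and m I :: "'a set" and b :: nat
  assumes "module scale"
    and "noetherian_ring TYPE('a)"
    and "local_ring m"
    and "infinite (UNIV // residue_rel m)"
    and "m_primary m I"
    and "fin_gen scale"
    and "module_dim scale = 1"
    and "0 < b"
    and "idmul scale I UNIV \<subseteq> idmul scale (ideal_pow m b) UNIV"
  shows "enat b \<le> h_Gbar scale I 0"
proof -
  interpret module scale by fact
  have I: "ideal I" and rad: "radical I = m"
    using \<open>m_primary m I\<close> by (auto simp: m_primary_def)
  obtain n where "ideal_pow m n \<subseteq> I"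
    using noetherian_ideal_pow_subset_radical[OF assms(2) local_ring_ideal[OF assms(3)] I] rad by blast
  then have "filt scale m n \<subseteq> H0_comp scale I 0"
    using idmul_subset_H0_comp_0 idmul_mono[of "ideal_pow m n" I UNIV UNIV] by (auto simp: filt_def)
  moreover have "\<not> filt scale m (b - 1) \<subseteq> H0_comp scale I 0"
  proof (rule filt_not_subset_H0_comp_0[OF assms(2,3) rad assms(6)])
    show "0 < module_dim scale" using \<open>module_dim scale = 1\<close> by simp
    show "idmul scale I UNIV \<subseteq> filt scale m (Suc (b - 1))"
      using assms(8,9) by (simp add: filt_def)
  qed
  ultimately have "enat (Suc (b - 1)) \<le> mlength scale (H0_comp scale I 0) UNIV"
    by (intro mlength_ge_filt_chain subspace_H0_comp_0)
  then show ?thesis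
    using \<open>0 < b\<close> by (simp add: h_Gbar_def filt_0)
qed

end
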